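(* In a nondeterministic Outcome Logic instance, for every program $C$ (terminating after finitely many steps), outcome assertion $\varphi$ and atomic assertions $Q_1,\ldots,Q_n$: $\not\vDash\langle\varphi\rangle\,C\,\langle\bigoplus_{i=1}^nQ_i\rangle$ holds iff there is an outcome assertion $\varphi'$ with $\varphi'\Rightarrow\varphi$ and $\mathsf{sat}(\varphi')$ such that either (i) $\vDash\langle\varphi'\rangle\,C\,\langle\overline{Q}_i\rangle$ for some $i$, or (ii) $\vDash\langle\varphi'\rangle\,C\,\langle(\bigwedge_{i=1}^n\overline{Q}_i)\oplus\top\rangle$, or (iii) $\vDash\langle\varphi'\rangle\,C\,\langle\top^\oplus\rangle$.
   Context: Nondeterministic instance: powerset monad with $\mathsf{bind}(S,k)=\bigcup_{x\in S}k(x)$, $\mathsf{unit}(x)=\{x\}$, monoid $(2^\Sigma,\cup,\emptyset)$. Programs $C::=\mathbb{0}\mid\mathbb{1}\mid C_1;C_2\mid C_1+C_2\mid C^\star\mid c$ have semantics $[\![\mathbb{0}]\!](\sigma)=\emptyset$, $[\![\mathbb{1}]\!](\sigma)=\{\sigma\}$, $[\![C_1;C_2]\!](\sigma)=\bigcup_{\tau\in[\![C_1]\!](\sigma)}[\![C_2]\!](\tau)$, $[\![C_1+C_2]\!](\sigma)=[\![C_1]\!](\sigma)\cup[\![C_2]\!](\sigma)$, $[\![C^\star]\!]$ the least fixed point of $f\mapsto\lambda\sigma.f^\dagger([\![C]\!](\sigma))\cup\{\sigma\}$ with $f^\dagger(S)=\bigcup_{\sigma\in S}f(\sigma)$. Atomic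 commands are those of the paper's guarded command languages: $\mathsf{assume}\ e$ (returns $\{\sigma\}$ if Boolean expression $e$ is true in $\sigma$, else $\emptyset$) and deterministic commands such as assignment $x:=e$ (and the heap commands of the memory language), whose effect on each state is a single state. Atomic assertions carry a satisfaction relation $\vDash_\Sigma$ on states and are closed under negation $\overline{Q}$ ($\sigma\vDash_\Sigma\overline{Q}$ iff $\sigma\not\vDash_\Sigma Q$); a set $S$ satisfies atomic $P$ iff $S\neq\emptyset$ and all $\sigma\in S$ satisfy $P$. Outcome assertions: $\top,\bot,\top^\oplus,\land,\oplus,\Rightarrow$, atomic; $S\vDash\top^\oplus$ iff $S=\emptyset$; $S\vDash\varphi\oplus\psi$ iff $S=S_1\cup S_2$ with $S_1\vDash\varphi,S_2\vDash\psi$; other connectives classical. $\vDash\langle\varphi\rangle C\langle\psi\rangle$ iff for all $S\subseteq\Sigma$, $S\vDash\varphi$ implies $[\![C]\!]^\dagger(S)\vDash\psi$. $\varphi'\Rightarrow\varphi$ means every set satisfying $\varphi'$ satisfies $\varphi$; $\mathsf{sat}(\varphi')$ means some set satisfies $\varphi'$. *)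

theory Defs
  imports Main
begin

definition dagger :: "('s \<Rightarrow> 's set) \<Rightarrow> 's set \<Rightarrow> 's set" where
  "dagger f S = (\<Union>\<sigma>\<in>S. f \<sigma>)"

text \<open>Atomic commands of the guarded command languages: assume e (Boolean test on
  states) and deterministic commands (assignment, heap commands, ...), modelled as an
  arbitrary state transformer.\<close>
datatype 's acmd = Assume "'s \<Rightarrow> bool" | Det "'s \<Rightarrow> 's"

fun acmd_sem :: "'s acmd \<Rightarrow> 's \<Rightarrow> 's set" where
  "acmd_sem (Assume e) \<sigma> = (if e \<sigma> then {\<sigma>} else {})"
| "acmd_sem (Det f) \<sigma> = {f \<sigma>}"

datatype 's prog =
    Zero
  | One
  | Seq "'s prog" "'s prog"
  | Plus "'s prog" "'s prog"
  | Star "'s prog"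
  | Atom "'s acmd"

definition star_sem :: "('s \<Rightarrow> 's set) \<Rightarrow> 's \<Rightarrow> 's set" where
  "star_sem c = lfp (\<lambda>f \<sigma>. dagger f (c \<sigma>) \<union> {\<sigma>})"

primrec sem :: "'s prog \<Rightarrow> 's \<Rightarrow> 's set" where
  "sem Zero \<sigma> = {}"
| "sem One \<sigma> = {\<sigma>}"
| "sem (Seq C1 C2) \<sigma> = dagger (sem C2) (sem C1 \<sigma>)"
| "sem (Plus C1 C2) \<sigma> = sem C1 \<sigma> \<union> sem C2 \<sigma>"
| "sem (Star C) \<sigma> = star_sem (sem C) \<sigma>"
| "sem (Atom c) \<sigma> = acmd_sem c \<sigma>"

datatype 's assn =
    ATop
  | ABot
  | ATopPlus
  | AAnd "'s assn" "'s assn"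
  | AOplus "'s assn" "'s assn"
  | AImp "'s assn" "'s assn"
  | AAtom "'s \<Rightarrow> bool"

definition neg_atom :: "('s \<Rightarrow> bool) \<Rightarrow> ('s \<Rightarrow> bool)" where
  "neg_atom Q = (\<lambda>\<sigma>. \<not> Q \<sigma>)"

fun sats :: "'s set \<Rightarrow> 's assn \<Rightarrow> bool" where
  "sats S ATop = True"
| "sats S ABot = False"
| "sats S ATopPlus = (S = {})"
| "sats S (AAnd p q) = (sats S p \<and> sats S q)"
| "sats S (AOplus p q) = (\<exists>S1 S2. S = S1 \<union> S2 \<and> sats S1 p \<and> sats S2 q)"
| "sats S (AImp p q) = (sats S p \<longrightarrow> sats S q)"
| "sats S (AAtom P) = (S \<noteq> {} \<and> (\<forall>\<sigma>\<in>S. P \<sigma>))"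

fun bigoplus :: "'s assn list \<Rightarrow> 's assn" where
  "bigoplus [] = ATopPlus"
| "bigoplus [p] = p"
| "bigoplus (p # ps) = AOplus p (bigoplus ps)"

fun bigand :: "'s assn list \<Rightarrow> 's assn" where
  "bigand [] = ATop"
| "bigand [p] = p"
| "bigand (p # ps) = AAnd p (bigand ps)"

definition entails :: "'s assn \<Rightarrow> 's assn \<Rightarrow> bool" where
  "entails p q = (\<forall>S. sats S p \<longrightarrow> sats S q)"

definition satisfiable :: "'s assn \<Rightarrow> bool" where
  "satisfiable p = (\<exists>S. sats S p)"

definition valid :: "'s assn \<Rightarrow> 's prog \<Rightarrow> 's assn \<Rightarrow> bool" where
  "valid p C q = (\<forall>S. sats S p \<longrightarrow> sats (dagger (sem C) S) q)"

end

theory Submission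
  imports Defs
begin

(* A triple with postcondition Q_1 (+) ... (+) Q_n fails iff some set S of start states
   satisfying phi has an output set T that is nonempty but misses some Q_i, or contains a
   state satisfying no Q_i, or is empty.  Each of these properties of T persists when S is
   shrunk to any S' with sigma \<in> S' \<subseteq> S, for a suitable start state sigma; and
   "phi, and a subset of S containing sigma" is an outcome assertion that S satisfies and that
   entails phi.  It is the required phi'.  Conversely, each of the three postconditions is
   incompatible with Q_1 (+) ... (+) Q_n. *)

lemma dagger_mono: "S' \<subseteq> S \<Longrightarrow> dagger f S' \<subseteq> dagger f S"
  unfolding dagger_def by blast

lemma subset_dagger: "\<sigma> \<in> S \<Longrightarrow> f \<sigma> \<subseteq> dagger f S"
  unfolding dagger_def by blast

lemma split_iff_cover_insert:
  "(\<exists>S1 S2. T = S1 \<union> S2 \<and> S1 \<noteq> {} \<and> (\<forall>t\<in>S1. Q t) \<and>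
      (\<forall>P\<in>Ps. \<exists>t\<in>S2. P t) \<and> (\<forall>t\<in>S2. \<exists>P\<in>Ps. P t)) \<longleftrightarrow>
    (\<forall>P\<in>insert Q Ps. \<exists>t\<in>T. P t) \<and> (\<forall>t\<in>T. \<exists>P\<in>insert Q Ps. P t)"
  (is "?split \<longleftrightarrow> ?covered")
proof
  assume ?split
  then obtain S1 S2 where "T = S1 \<union> S2" "S1 \<noteq> {}" "\<forall>t\<in>S1. Q t"
      "\<forall>P\<in>Ps. \<exists>t\<in>S2. P t" "\<forall>t\<in>S2. \<exists>P\<in>Ps. P t"
    by blast
  then show ?covered
    by auto
next
  assume covered: ?covered
  define S1 where "S1 = {t\<in>T. Q t}"
  define S2 where "S2 = {t\<in>T. \<exists>P\<in>Ps. P t}"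
  have "T = S1 \<union> S2" "S1 \<noteq> {}" "\<forall>P\<in>Ps. \<exists>t\<in>S2. P t"
    using covered unfolding S1_def S2_def by blast+
  moreover have "\<forall>t\<in>S1. Q t" "\<forall>t\<in>S2. \<exists>P\<in>Ps. P t"
    unfolding S1_def S2_def by blast+
  ultimately show ?split
    by blast
qed

lemma sats_bigoplus_atoms:
  assumes "Qs \<noteq> []"
  shows "sats T (bigoplus (map AAtom Qs)) \<longleftrightarrow>
    (\<forall>Q\<in>set Qs. \<exists>t\<in>T. Q t) \<and> (\<forall>t\<in>T. \<exists>Q\<in>set Qs. Q t)"
  using assms
proof (induction Qs arbitrary: T rule: induct_list012)
  case (3 Q Q' Qs)
  have "sats T (bigoplus (map AAtom (Q # Q' # Qs))) \<longleftrightarrow>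
    (\<exists>S1 S2. T = S1 \<union> S2 \<and> S1 \<noteq> {} \<and> (\<forall>t\<in>S1. Q t) \<and>
       (\<forall>P\<in>set (Q' # Qs). \<exists>t\<in>S2. P t) \<and> (\<forall>t\<in>S2. \<exists>P\<in>set (Q' # Qs). P t))"
    using "3.IH"(2) by simp
  also have "\<dots> \<longleftrightarrow>
    (\<forall>P\<in>set (Q # Q' # Qs). \<exists>t\<in>T. P t) \<and> (\<forall>t\<in>T. \<exists>P\<in>set (Q # Q' # Qs). P t)"
    unfolding list.set(2)[of Q] by (rule split_iff_cover_insert)
  finally show ?case .
qed auto

lemma sats_bigand_neg_atoms:
  assumes "Qs \<noteq> []"
  shows "sats T (bigand (map (\<lambda>Q. AAtom (neg_atom Q)) Qs)) \<longleftrightarrow>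
    T \<noteq> {} \<and> (\<forall>t\<in>T. \<forall>Q\<in>set Qs. \<not> Q t)"
  using assms by (induction Qs rule: induct_list012) (auto simp: neg_atom_def)

lemma sats_bigand_neg_atoms_oplus_top:
  assumes "Qs \<noteq> []"
  shows "sats T (AOplus (bigand (map (\<lambda>Q. AAtom (neg_atom Q)) Qs)) ATop) \<longleftrightarrow>
    (\<exists>t\<in>T. sats {t} (bigand (map (\<lambda>Q. AAtom (neg_atom Q)) Qs)))"
proof
  assume "\<exists>t\<in>T. sats {t} (bigand (map (\<lambda>Q. AAtom (neg_atom Q)) Qs))"
  then obtain t where "t \<in> T" "sats {t} (bigand (map (\<lambda>Q. AAtom (neg_atom Q)) Qs))" ..
  moreover from \<open>t \<in> T\<close> have "T = {t} \<union> T" by blast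
  ultimately show "sats T (AOplus (bigand (map (\<lambda>Q. AAtom (neg_atom Q)) Qs)) ATop)"
    unfolding sats.simps by blast
next
  assume "sats T (AOplus (bigand (map (\<lambda>Q. AAtom (neg_atom Q)) Qs)) ATop)"
  then obtain S1 where "S1 \<subseteq> T" "sats S1 (bigand (map (\<lambda>Q. AAtom (neg_atom Q)) Qs))"
    by auto
  then show "\<exists>t\<in>T. sats {t} (bigand (map (\<lambda>Q. AAtom (neg_atom Q)) Qs))"
    unfolding sats_bigand_neg_atoms[OF assms] by blast
qed

lemma not_sats_bigoplus_atoms_iff:
  assumes "Qs \<noteq> []"
  shows "\<not> sats T (bigoplus (map AAtom Qs)) \<longleftrightarrow>
    (\<exists>i<length Qs. sats T (AAtom (neg_atom (Qs ! i))))
    \<or> sats T (AOplus (bigand (map (\<lambda>Q. AAtom (neg_atom Q)) Qs)) ATop)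
    \<or> sats T ATopPlus"
proof -
  have "(\<exists>i<length Qs. sats T (AAtom (neg_atom (Qs ! i)))) \<longleftrightarrow>
      T \<noteq> {} \<and> \<not> (\<forall>Q\<in>set Qs. \<exists>t\<in>T. Q t)"
    by (auto simp: neg_atom_def all_set_conv_all_nth)
  then show ?thesis
    using assms
    unfolding sats_bigoplus_atoms[OF assms] sats_bigand_neg_atoms_oplus_top[OF assms]
      sats_bigand_neg_atoms[OF assms]
    by auto
qed

lemma not_valid_if_strengthening_contradicts:
  assumes "entails \<phi>' \<phi>" "satisfiable \<phi>'" "valid \<phi>' C \<psi>'"
    and "\<And>T. sats T \<psi>' \<Longrightarrow> \<not> sats T \<psi>"
  shows "\<not> valid \<phi> C \<psi>"
  using assms unfolding entails_def satisfiable_def valid_def by blast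

(* The atom alone is never satisfied by the empty set; the implication readmits it. *)
definition subset_assn :: "'s set \<Rightarrow> 's assn" where
  "subset_assn S = AImp (AImp ATopPlus ABot) (AAtom (\<lambda>\<sigma>. \<sigma> \<in> S))"

definition contains_assn :: "'s \<Rightarrow> 's assn" where
  "contains_assn \<sigma> = AOplus (AAtom (\<lambda>\<tau>. \<tau> = \<sigma>)) ATop"

lemma sats_subset_assn [simp]: "sats S' (subset_assn S) \<longleftrightarrow> S' \<subseteq> S"
  unfolding subset_assn_def by auto

lemma sats_contains_assn [simp]: "sats S (contains_assn \<sigma>) \<longleftrightarrow> \<sigma> \<in> S"
proof
  assume "\<sigma> \<in> S"
  then have "S = {\<sigma>} \<union> S" by blast
  then show "sats S (contains_assn \<sigma>)"
    unfolding contains_assn_def sats.simps by blast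
qed (auto simp: contains_assn_def)

lemma ex_strengthening_pinned:
  assumes "sats S \<phi>" "\<sigma> \<in> S"
    and "\<And>S'. \<sigma> \<in> S' \<Longrightarrow> S' \<subseteq> S \<Longrightarrow> sats (dagger (sem C) S') \<psi>"
  shows "\<exists>\<phi>'. entails \<phi>' \<phi> \<and> satisfiable \<phi>' \<and> valid \<phi>' C \<psi>"
proof (intro exI conjI)
  let ?\<phi>' = "AAnd \<phi> (AAnd (subset_assn S) (contains_assn \<sigma>))"
  show "entails ?\<phi>' \<phi>" "satisfiable ?\<phi>'" "valid ?\<phi>' C \<psi>"
    using assms unfolding entails_def satisfiable_def valid_def by auto
qed

lemma ex_strengthening_atom:
  assumes "sats S \<phi>" "sats (dagger (sem C) S) (AAtom P)"
  shows "\<exists>\<phi>'. entails \<phi>' \<phi> \<and> satisfiable \<phi>' \<and> valid \<phi>' C (AAtom P)"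
proof -
  from assms(2) obtain \<sigma> where "\<sigma> \<in> S" "sem C \<sigma> \<noteq> {}"
    by (auto simp: dagger_def)
  have "sats (dagger (sem C) S') (AAtom P)" if "\<sigma> \<in> S'" "S' \<subseteq> S" for S'
    using assms(2) subset_dagger[OF \<open>\<sigma> \<in> S'\<close>, of "sem C"] dagger_mono[OF \<open>S' \<subseteq> S\<close>, of "sem C"]
      \<open>sem C \<sigma> \<noteq> {}\<close>
    by auto
  then show ?thesis
    using ex_strengthening_pinned[OF assms(1) \<open>\<sigma> \<in> S\<close>] by blast
qed

lemma ex_strengthening_oplus_top:
  assumes "sats S \<phi>" "\<tau> \<in> dagger (sem C) S" "sats {\<tau>} \<psi>"
  shows "\<exists>\<phi>'. entails \<phi>' \<phi> \<and> satisfiable \<phi>' \<and> valid \<phi>' C (AOplus \<psi> ATop)"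
proof -
  from assms(2) obtain \<sigma> where "\<sigma> \<in> S" "\<tau> \<in> sem C \<sigma>"
    by (auto simp: dagger_def)
  have "sats (dagger (sem C) S') (AOplus \<psi> ATop)" if "\<sigma> \<in> S'" for S'
  proof -
    have "dagger (sem C) S' = {\<tau>} \<union> dagger (sem C) S'"
      using subset_dagger[OF that, of "sem C"] \<open>\<tau> \<in> sem C \<sigma>\<close> by blast
    then show ?thesis
      using assms(3) unfolding sats.simps by blast
  qed
  then show ?thesis
    using ex_strengthening_pinned[OF assms(1) \<open>\<sigma> \<in> S\<close>] by blast
qed

lemma ex_strengthening_top_plus:
  assumes "sats S \<phi>" "sats (dagger (sem C) S) ATopPlus"
  shows "\<exists>\<phi>'. entails \<phi>' \<phi> \<and> satisfiable \<phi>' \<and> valid \<phi>' C ATopPlus"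
proof (intro exI conjI)
  let ?\<phi>' = "AAnd \<phi> (subset_assn S)"
  have "dagger (sem C) S' = {}" if "S' \<subseteq> S" for S'
    using assms(2) dagger_mono[OF that, of "sem C"] by auto
  then show "entails ?\<phi>' \<phi>" "satisfiable ?\<phi>'" "valid ?\<phi>' C ATopPlus"
    using assms(1) unfolding entails_def satisfiable_def valid_def by auto
qed

theorem theorem5p6:
  fixes C :: "'s prog" and \<phi> :: "'s assn" and Qs :: "('s \<Rightarrow> bool) list"
  assumes "Qs \<noteq> []"
  shows "(\<not> valid \<phi> C (bigoplus (map AAtom Qs))) \<longleftrightarrow>
    (\<exists>\<phi>'. entails \<phi>' \<phi> \<and> satisfiable \<phi>' \<and>
       ((\<exists>i<length Qs. valid \<phi>' C (AAtom (neg_atom (Qs ! i))))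
        \<or> valid \<phi>' C (AOplus (bigand (map (\<lambda>Q. AAtom (neg_atom Q)) Qs)) ATop)
        \<or> valid \<phi>' C ATopPlus))"
    (is "_ \<longleftrightarrow> ?refuted")
proof
  assume "\<not> valid \<phi> C (bigoplus (map AAtom Qs))"
  then obtain S where pre: "sats S \<phi>"
    and "\<not> sats (dagger (sem C) S) (bigoplus (map AAtom Qs))"
    unfolding valid_def by blast
  then consider
      (neg_atom) i where "i < length Qs" "sats (dagger (sem C) S) (AAtom (neg_atom (Qs ! i)))"
    | (neg_all) \<tau> where "\<tau> \<in> dagger (sem C) S" "sats {\<tau>} (bigand (map (\<lambda>Q. AAtom (neg_atom Q)) Qs))"
    | (no_output) "sats (dagger (sem C) S) ATopPlus"
    unfolding not_sats_bigoplus_atoms_iff[OF assms] sats_bigand_neg_atoms_oplus_top[OF assms]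
    by blast
  then show ?refuted
    by cases (use ex_strengthening_atom[OF pre] ex_strengthening_oplus_top[OF pre]
        ex_strengthening_top_plus[OF pre] in blast)+
next
  assume ?refuted
  then obtain \<phi>' \<psi>' where "entails \<phi>' \<phi>" "satisfiable \<phi>'" "valid \<phi>' C \<psi>'"
    and "\<forall>T. sats T \<psi>' \<longrightarrow> \<not> sats T (bigoplus (map AAtom Qs))"
    unfolding not_sats_bigoplus_atoms_iff[OF assms] by blast
  then show "\<not> valid \<phi> C (bigoplus (map AAtom Qs))"
    using not_valid_if_strengthening_contradicts by metis
qed

end
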